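(* Let $\mathcal G=(\mathcal N,E)$ be an undirected graph on $N$ nodes with adjacency-type matrix $A$ (defined in the context), and let $x^\star$ be any solution of the fractional dominating set linear program $$\min_{x\in\mathbb R^N}\mathbf 1^\top x\quad\text{s.t.}\quad Ax\ge\mathbf 1,\ x\ge 0.$$ Run Algorithm 1 (described in the context) with an arbitrary $\delta>0$ and $\alpha=\frac{\delta}{2(d_{\max}+1)^2}$. Then for every $k=0,1,2,\dots$ the iterate $x^{(k)}=(x^{(k)}_1,\dots,x^{(k)}_N)^\top$ is feasible for this linear program (i.e. $Ax^{(k)}\ge\mathbf 1$ and $x^{(k)}\ge 0$), and $$\frac{\mathbf 1^\top x^{(k)}-\mathbf 1^\top x^\star}{\mathbf 1^\top x^\star}\le 32(d_{\max}+1)^3\Big(1+\frac1\delta\Big)\frac{1}{(k+1)^2}+\frac{\delta}{2}.$$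
   Context: $A$ is the $N\times N$ symmetric matrix with $A_{ii}=1$ for all $i$ and, for $i\ne j$, $A_{ij}=1$ if $\{i,j\}\in E$, $A_{ij}=0$ otherwise. $\Omega_i$ is the closed one-hop neighborhood of node $i$ (its neighbors together with $i$). $d_{\max}$ is the maximal degree of $\mathcal G$, where the degree of $i$ is its number of neighbors excluding $i$, i.e. $|\Omega_i|-1$. $\mathbf 1$ is the all-ones vector, $[c]_+=\max\{0,c\}$, and $\mathcal P_{[0,1]}(c)=\min\{1,\max\{0,c\}\}$. Algorithm 1: initialize $\lambda_i^{(0)}=0$ and $z_i^{(-1)}=0$ for all $i$ (the value of $\overline x_j^{(-1)}$ is irrelevant since it is multiplied by $0$). For $k=0,1,2,\dots$, each node $i$ computes $$\widehat x_i^{(k)}=\mathcal P_{[0,1]}\Big(\tfrac1\delta\big(\textstyle\sum_{j\in\Omega_i}\lambda_j^{(k)}-1\big)\Big),$$ and then $$z_i^{(k)}=z_i^{(k-1)}+\tfrac{k+1}{2}\Big(1-\textstyle\sum_{j\in\Omega_i}\widehat x_j^{(k)}\Big),\qquad \mu_i^{(k)}=\Big[\lambda_i^{(k)}+\alpha\big(1-\textstyle\sum_{j\in\Omega_i}\widehat x_j^{(k)}\big)\Big]_+,$$ $$\lambda_i^{(k+1)}=\tfrac{k+1}{k+3}\mu_i^{(k)}+\tfrac{2}{k+3}\,\alpha\,[z_i^{(k)}]_+,\qquad \overline x_j^{(k)}=\tfrac{k}{k+2}\overline x_j^{(k-1)}+\tfrac{2}{k+2}\widehat x_j^{(k)},$$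 $$x_i^{(k)}=\overline x_i^{(k)}+\Big[1-\textstyle\sum_{j\in\Omega_i}\overline x_j^{(k)}\Big]_+ .$$ *)

theory Defs
  imports Complex_Main
begin

definition is_graph :: "nat \<Rightarrow> nat set set \<Rightarrow> bool" where
  "is_graph N E \<longleftrightarrow> (\<forall>e\<in>E. \<exists>i j. e = {i, j} \<and> i \<noteq> j \<and> i < N \<and> j < N)"

definition adjA :: "nat set set \<Rightarrow> nat \<Rightarrow> nat \<Rightarrow> real" where
  "adjA E i j = (if i = j then 1 else if {i, j} \<in> E then 1 else 0)"

definition Omega :: "nat \<Rightarrow> nat set set \<Rightarrow> nat \<Rightarrow> nat set" where
  "Omega N E i = {j. j < N \<and> (j = i \<or> {i, j} \<in> E)}"

definition dmax :: "nat \<Rightarrow> nat set set \<Rightarrow> nat" where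
  "dmax N E = Max ((\<lambda>i. card (Omega N E i) - 1) ` {..<N})"

definition fds_feasible :: "nat \<Rightarrow> nat set set \<Rightarrow> (nat \<Rightarrow> real) \<Rightarrow> bool" where
  "fds_feasible N E x \<longleftrightarrow>
     (\<forall>i<N. (\<Sum>j<N. adjA E i j * x j) \<ge> 1) \<and> (\<forall>i<N. x i \<ge> 0)"

definition fds_optimal :: "nat \<Rightarrow> nat set set \<Rightarrow> (nat \<Rightarrow> real) \<Rightarrow> bool" where
  "fds_optimal N E x \<longleftrightarrow> fds_feasible N E x \<and>
     (\<forall>y. fds_feasible N E y \<longrightarrow> (\<Sum>i<N. x i) \<le> (\<Sum>i<N. y i))"

definition proj01 :: "real \<Rightarrow> real" where
  "proj01 c = min 1 (max 0 c)"

definition pos :: "real \<Rightarrow> real" where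
  "pos c = max 0 c"

definition xhat :: "nat \<Rightarrow> nat set set \<Rightarrow> real \<Rightarrow> (nat \<Rightarrow> real) \<Rightarrow> nat \<Rightarrow> real" where
  "xhat N E \<delta> lam i = proj01 ((1 / \<delta>) * ((\<Sum>j\<in>Omega N E i. lam j) - 1))"

text \<open>alg_state k = (lambda^(k), z^(k-1), xbar^(k-1)), with lambda^(0)=0, z^(-1)=0, xbar^(-1)=0
  (the value of xbar^(-1) is irrelevant).\<close>
fun alg_state :: "nat \<Rightarrow> nat set set \<Rightarrow> real \<Rightarrow> real \<Rightarrow> nat \<Rightarrow>
    (nat \<Rightarrow> real) \<times> (nat \<Rightarrow> real) \<times> (nat \<Rightarrow> real)" where
  "alg_state N E \<delta> \<alpha> 0 = ((\<lambda>_. 0), (\<lambda>_. 0), (\<lambda>_. 0))"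
| "alg_state N E \<delta> \<alpha> (Suc k) =
     (let (lam, z, xb) = alg_state N E \<delta> \<alpha> k;
          xh = xhat N E \<delta> lam;
          r = (\<lambda>i. 1 - (\<Sum>j\<in>Omega N E i. xh j));
          z' = (\<lambda>i. z i + (real k + 1) / 2 * r i);
          mu = (\<lambda>i. pos (lam i + \<alpha> * r i));
          lam' = (\<lambda>i. (real k + 1) / (real k + 3) * mu i + 2 / (real k + 3) * \<alpha> * pos (z' i));
          xb' = (\<lambda>j. real k / (real k + 2) * xb j + 2 / (real k + 2) * xh j)
      in (lam', z', xb'))"

definition xbar :: "nat \<Rightarrow> nat set set \<Rightarrow> real \<Rightarrow> real \<Rightarrow> nat \<Rightarrow> nat \<Rightarrow> real" where
  "xbar N E \<delta> \<alpha> k = snd (snd (alg_state N E \<delta> \<alpha> (Suc k)))"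

definition alg_x :: "nat \<Rightarrow> nat set set \<Rightarrow> real \<Rightarrow> real \<Rightarrow> nat \<Rightarrow> nat \<Rightarrow> real" where
  "alg_x N E \<delta> \<alpha> k i =
     xbar N E \<delta> \<alpha> k i + pos (1 - (\<Sum>j\<in>Omega N E i. xbar N E \<delta> \<alpha> k j))"

end

theory Submission
  imports Defs "HOL-Analysis.Convex"
begin

text \<open>
  Algorithm 1 is Nesterov's accelerated projected gradient ascent on the dual of the regularized
  LP  min \<Sigma>x + \<delta>/2 \<Parallel>x\<Parallel>^2  subject to  Ax \<ge> 1, 0 \<le> x \<le> 1.  The dual function d is concave with
  (1/\<alpha>)-Lipschitz gradient, since the cost is \<delta>-strongly convex and \<Parallel>A\<Parallel>^2 \<le> (d_max + 1)^2.
  With weights a_t = (t+1)/2 and A_k = \<Sigma>_{t\<le>k} a_t, the estimate function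
  \<Phi>_k(\<lambda>) = \<Sigma>_{t\<le>k} a_t L(xhat_t, \<lambda>) - \<Parallel>\<lambda>\<Parallel>^2/(2\<alpha>) stays below A_k d(\<mu>_k) on \<lambda> \<ge> 0.
  Since \<Sigma>_{t\<le>k} a_t xhat_t = A_k xbar_k, evaluating \<Phi>_k at a multiple of the constraint violation
  of xbar_k and using d(\<mu>_k) \<le> (1 + \<delta>/2) \<Sigma>x\<star> bounds the sum of xbar_k and its total violation by
  (1 + \<delta>/2) \<Sigma>x\<star> + N/(2\<alpha> A_k). Repairing the violation costs at most its size, and
  \<Sigma>x\<star> \<ge> N/(d_max + 1) turns the additive error into a relative one.
\<close>

lemma proj01_minimizes_quadratic:
  fixes \<delta> c y :: real
  assumes "\<delta> > 0" and "0 \<le> y" "y \<le> 1"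
  defines "p \<equiv> proj01 ((c - 1) / \<delta>)"
  shows "p + \<delta>/2 * p^2 - c * p + \<delta>/2 * (y - p)^2 \<le> y + \<delta>/2 * y^2 - c * y"
proof -
  have "y + \<delta>/2 * y^2 - c * y - (p + \<delta>/2 * p^2 - c * p + \<delta>/2 * (y - p)^2)
        = (1 - c + \<delta> * p) * (y - p)"
    by (simp add: algebra_simps power2_eq_square)
  moreover have "(1 - c + \<delta> * p) * (y - p) \<ge> 0"
  proof (cases "c - 1 \<le> 0")
    case True
    then have "p = 0" using assms(1) by (simp add: p_def proj01_def divide_nonpos_pos)
    with True assms(2) show ?thesis by simp
  next
    case False
    show ?thesis
    proof (cases "c - 1 \<ge> \<delta>")
      case True
      then have "p = 1" using assms(1) by (simp add: p_def proj01_def field_simps)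
      with True assms(3) show ?thesis by (simp add: mult_nonpos_nonpos)
    next
      case False
      with \<open>\<not> c - 1 \<le> 0\<close> have "\<delta> * p = c - 1"
        using assms(1) by (simp add: p_def proj01_def field_simps)
      then show ?thesis by simp
    qed
  qed
  ultimately show ?thesis by linarith
qed

lemma proj01_bounds: "0 \<le> proj01 c" "proj01 c \<le> 1"
  by (auto simp: proj01_def)

lemma pos_nonneg: "0 \<le> pos c"
  by (simp add: pos_def)

lemma nonneg_mult_pos: "a \<ge> 0 \<Longrightarrow> a * pos c = pos (a * c)"
  for a c :: real
  by (simp add: pos_def max_mult_distrib_left)

lemma pos_projection_sq_dist:
  fixes u c :: real
  assumes "u \<ge> 0"
  shows "(u - pos c)^2 + (pos c - c)^2 \<le> (u - c)^2"
  using assms by (cases "c \<ge> 0") (simp_all add: pos_def power2_eq_square algebra_simps mult_nonpos_nonneg)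

lemma pos_maximizes_concave_quadratic:
  fixes \<alpha> g l u :: real
  assumes "\<alpha> > 0" and "u \<ge> 0"
  defines "p \<equiv> pos (l + \<alpha> * g)"
  shows "g * (u - l) - (u - l)^2 / (2*\<alpha>) + (u - p)^2 / (2*\<alpha>) \<le> g * (p - l) - (p - l)^2 / (2*\<alpha>)"
proof -
  have square: "g * (w - l) - (w - l)^2 / (2*\<alpha>) = \<alpha> * g^2 / 2 - (w - (l + \<alpha> * g))^2 / (2*\<alpha>)" for w
    using assms(1) by (simp add: field_simps power2_eq_square)
  have "(u - p)^2 + (p - (l + \<alpha> * g))^2 \<le> (u - (l + \<alpha> * g))^2"
    unfolding p_def using assms(2) by (rule pos_projection_sq_dist)
  then have "(u - p)^2 / (2*\<alpha>) + (p - (l + \<alpha> * g))^2 / (2*\<alpha>) \<le> (u - (l + \<alpha> * g))^2 / (2*\<alpha>)"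
    using assms(1) by (simp add: add_divide_distrib[symmetric] divide_right_mono)
  then show ?thesis unfolding square by linarith
qed

lemma le_quadratic_plus_inverse:
  fixes c s :: real
  assumes "c > 0"
  shows "s \<le> c/2 * s^2 + 1/(2*c)"
proof -
  have "c/2 * s^2 + 1/(2*c) - s = (c * s - 1)^2 / (2*c)"
    using assms by (simp add: field_simps power2_eq_square)
  moreover have "(c * s - 1)^2 / (2*c) \<ge> 0"
    using assms by simp
  ultimately show ?thesis by linarith
qed

lemma mult_le_weighted_squares:
  fixes a b \<delta> :: real
  assumes "\<delta> > 0"
  shows "a * b \<le> \<delta>/2 * a^2 + b^2 / (2*\<delta>)"
proof -
  have "\<delta>/2 * a^2 + b^2 / (2*\<delta>) - a * b = (\<delta> * a - b)^2 / (2*\<delta>)"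
    using assms by (simp add: field_simps power2_eq_square)
  moreover have "(\<delta> * a - b)^2 / (2*\<delta>) \<ge> 0"
    using assms by simp
  ultimately show ?thesis by linarith
qed

locale fds_dual_method =
  fixes N :: nat and E :: "nat set set" and \<delta> \<alpha> :: real
  assumes delta_pos: "\<delta> > 0"
    and alpha_def: "\<alpha> = \<delta> / (2 * (real (dmax N E) + 1) ^ 2)"
begin

abbreviation nbhd :: "nat \<Rightarrow> nat set" where
  "nbhd i \<equiv> Omega N E i"

definition D :: real where
  "D = real (dmax N E) + 1"

definition Amul :: "(nat \<Rightarrow> real) \<Rightarrow> nat \<Rightarrow> real" where
  "Amul x i = (\<Sum>j\<in>nbhd i. x j)"

definition sqnorm :: "(nat \<Rightarrow> real) \<Rightarrow> real" where
  "sqnorm w = (\<Sum>i<N. (w i)^2)"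

lemma D_ge_1: "D \<ge> 1"
  by (simp add: D_def)

lemma alpha_pos: "\<alpha> > 0"
  using delta_pos by (simp add: alpha_def)

lemma alpha_eq: "\<alpha> = \<delta> / (2 * D^2)"
  by (simp add: alpha_def D_def)

lemma finite_nbhd: "finite (nbhd i)"
  by (simp add: Omega_def)

lemma nbhd_subset: "nbhd i \<subseteq> {..<N}"
  by (auto simp: Omega_def)

lemma self_in_nbhd: "i < N \<Longrightarrow> i \<in> nbhd i"
  by (simp add: Omega_def)

text \<open>Symmetry comes for free because edges are unordered sets.\<close>

lemma nbhd_sym: "i < N \<Longrightarrow> j < N \<Longrightarrow> j \<in> nbhd i \<longleftrightarrow> i \<in> nbhd j"
  by (auto simp: Omega_def insert_commute)

lemma sum_nbhd_swap: "(\<Sum>i<N. \<Sum>j\<in>nbhd i. F i j) = (\<Sum>j<N. \<Sum>i\<in>nbhd j. F i j)"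
proof -
  have restrict: "(\<Sum>j\<in>nbhd i. G j) = (\<Sum>j<N. if j \<in> nbhd i then G j else 0)" for i G
    using sum.inter_restrict[of "{..<N}" G "nbhd i"] nbhd_subset by (simp add: Int_absorb1)
  have "(\<Sum>i<N. \<Sum>j<N. if j \<in> nbhd i then F i j else 0)
        = (\<Sum>j<N. \<Sum>i<N. if i \<in> nbhd j then F i j else 0)"
    by (subst sum.swap) (intro sum.cong refl, simp add: nbhd_sym)
  then show ?thesis by (simp add: restrict)
qed

lemma card_nbhd_le_D: "i < N \<Longrightarrow> real (card (nbhd i)) \<le> D"
proof -
  assume i: "i < N"
  have "card (nbhd i) \<ge> 1"
    using self_in_nbhd[OF i] finite_nbhd by (metis One_nat_def Suc_leI card_gt_0_iff empty_iff)
  moreover have "card (nbhd i) - 1 \<le> dmax N E"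
    unfolding dmax_def using i by (intro Max_ge) auto
  ultimately show ?thesis
    unfolding D_def by linarith
qed

lemma sum_adjA_eq_Amul: "i < N \<Longrightarrow> (\<Sum>j<N. adjA E i j * x j) = Amul x i"
  unfolding Amul_def using nbhd_subset[of i]
  by (subst sum.mono_neutral_cong_left[of "{..<N}" "nbhd i"]) (auto simp: adjA_def Omega_def)

lemma fds_feasible_iff: "fds_feasible N E x \<longleftrightarrow> (\<forall>i<N. Amul x i \<ge> 1) \<and> (\<forall>i<N. x i \<ge> 0)"
  by (simp add: fds_feasible_def sum_adjA_eq_Amul)

lemma sum_Amul: "(\<Sum>i<N. Amul x i) = (\<Sum>j<N. real (card (nbhd j)) * x j)"
  unfolding Amul_def by (simp add: sum_nbhd_swap[where F = "\<lambda>i j. x j"])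

lemma sqnorm_nonneg: "sqnorm w \<ge> 0"
  by (simp add: sqnorm_def sum_nonneg)

lemma sqnorm_scale: "sqnorm (\<lambda>i. c * w i) = c^2 * sqnorm w"
  by (simp add: sqnorm_def sum_distrib_left power_mult_distrib)

lemma sqnorm_Amul_le: "sqnorm (Amul w) \<le> D^2 * sqnorm w"
proof -
  have "(Amul w i)^2 \<le> D * (\<Sum>j\<in>nbhd i. (w j)^2)" if "i < N" for i
  proof -
    have "(Amul w i)^2 \<le> (\<Sum>j\<in>nbhd i. (w j)^2) * card (nbhd i)"
      unfolding Amul_def by (rule sum_squared_le_sum_of_squares)
    also have "\<dots> \<le> (\<Sum>j\<in>nbhd i. (w j)^2) * D"
      using card_nbhd_le_D[OF that] by (intro mult_left_mono) (auto intro: sum_nonneg)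
    finally show ?thesis by (simp add: mult.commute)
  qed
  then have "sqnorm (Amul w) \<le> D * (\<Sum>i<N. Amul (\<lambda>j. (w j)^2) i)"
    unfolding sqnorm_def Amul_def sum_distrib_left by (intro sum_mono) auto
  also have "\<dots> \<le> D * (\<Sum>j<N. D * (w j)^2)"
    unfolding sum_Amul using D_ge_1 card_nbhd_le_D
    by (intro mult_left_mono sum_mono mult_right_mono) auto
  also have "\<dots> = D^2 * sqnorm w"
    by (simp add: sqnorm_def sum_distrib_left power2_eq_square mult.assoc)
  finally show ?thesis .
qed

lemma sum_mult_Amul: "(\<Sum>i<N. w i * Amul x i) = (\<Sum>j<N. x j * Amul w j)"
  unfolding Amul_def sum_distrib_left
  by (subst sum_nbhd_swap) (simp add: mult.commute)

definition cost :: "(nat \<Rightarrow> real) \<Rightarrow> real" where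
  "cost x = (\<Sum>j<N. x j + \<delta>/2 * (x j)^2)"

definition slack :: "(nat \<Rightarrow> real) \<Rightarrow> nat \<Rightarrow> real" where
  "slack x i = 1 - Amul x i"

definition lagrangian :: "(nat \<Rightarrow> real) \<Rightarrow> (nat \<Rightarrow> real) \<Rightarrow> real" where
  "lagrangian x l = cost x + (\<Sum>i<N. l i * slack x i)"

definition xmin :: "(nat \<Rightarrow> real) \<Rightarrow> nat \<Rightarrow> real" where
  "xmin l = xhat N E \<delta> l"

definition dual :: "(nat \<Rightarrow> real) \<Rightarrow> real" where
  "dual l = lagrangian (xmin l) l"

definition ascent :: "(nat \<Rightarrow> real) \<Rightarrow> nat \<Rightarrow> real" where
  "ascent l = (\<lambda>i. pos (l i + \<alpha> * slack (xmin l) i))"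

lemma xmin_eq: "xmin l j = proj01 ((Amul l j - 1) / \<delta>)"
  by (simp add: xmin_def xhat_def Amul_def)

lemma xmin_bounds: "0 \<le> xmin l j" "xmin l j \<le> 1"
  by (simp_all add: xmin_eq proj01_bounds)

lemma lagrangian_eq: "lagrangian x l = (\<Sum>j<N. x j + \<delta>/2 * (x j)^2 - x j * Amul l j) + (\<Sum>i<N. l i)"
  using sum_mult_Amul[of l x]
  by (simp add: lagrangian_def cost_def slack_def sum_subtractf right_diff_distrib)

lemma lagrangian_shift: "lagrangian x m = lagrangian x l + (\<Sum>i<N. slack x i * (m i - l i))"
  by (simp add: lagrangian_def sum.distrib[symmetric] algebra_simps)

lemma lagrangian_affine:
  assumes "A + b > 0"
  shows "A * lagrangian x m + b * lagrangian x v = (A + b) * lagrangian x (\<lambda>i. (A * m i + b * v i) / (A + b))"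
proof -
  have "(A + b) * (\<Sum>i<N. (A * m i + b * v i) / (A + b) * slack x i)
        = (\<Sum>i<N. A * (m i * slack x i) + b * (v i * slack x i))"
    unfolding sum_distrib_left using assms by (intro sum.cong) (auto simp: field_simps)
  then show ?thesis
    unfolding lagrangian_def by (simp add: algebra_simps sum.distrib sum_distrib_left)
qed

lemma dual_plus_sq_le_lagrangian:
  assumes "\<And>j. j < N \<Longrightarrow> 0 \<le> x j \<and> x j \<le> 1"
  shows "dual l + \<delta>/2 * sqnorm (\<lambda>j. x j - xmin l j) \<le> lagrangian x l"
proof -
  have "(\<Sum>j<N. xmin l j + \<delta>/2 * (xmin l j)^2 - xmin l j * Amul l j) + \<delta>/2 * sqnorm (\<lambda>j. x j - xmin l j)
     = (\<Sum>j<N. xmin l j + \<delta>/2 * (xmin l j)^2 - Amul l j * xmin l j + \<delta>/2 * (x j - xmin l j)^2)"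
    by (simp add: sqnorm_def sum.distrib sum_distrib_left mult.commute)
  also have "\<dots> \<le> (\<Sum>j<N. x j + \<delta>/2 * (x j)^2 - Amul l j * x j)"
    using assms delta_pos unfolding xmin_eq by (intro sum_mono proj01_minimizes_quadratic) auto
  finally show ?thesis
    unfolding dual_def lagrangian_eq by (simp add: mult.commute)
qed

lemma dual_le_lagrangian:
  assumes "\<And>j. j < N \<Longrightarrow> 0 \<le> x j \<and> x j \<le> 1"
  shows "dual l \<le> lagrangian x l"
proof -
  have "0 \<le> \<delta>/2 * sqnorm (\<lambda>j. x j - xmin l j)"
    using delta_pos sqnorm_nonneg by simp
  moreover have "dual l + \<delta>/2 * sqnorm (\<lambda>j. x j - xmin l j) \<le> lagrangian x l"
    using assms by (rule dual_plus_sq_le_lagrangian)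
  ultimately show ?thesis by linarith
qed

text \<open>The descent lemma for the (1/\<alpha>)-smooth concave dual: the cross term produced by the
  change of minimizer is absorbed by strong convexity of the cost, leaving \<parallel>A w\<parallel>^2/(2\<delta>).\<close>

lemma dual_descent:
  "dual l + (\<Sum>i<N. slack (xmin l) i * (m i - l i)) - sqnorm (\<lambda>i. m i - l i) / (2*\<alpha>) \<le> dual m"
proof -
  define w where "w = (\<lambda>i. m i - l i)"
  define \<Delta> where "\<Delta> = (\<lambda>j. xmin m j - xmin l j)"
  have "dual m = lagrangian (xmin m) l + (\<Sum>i<N. slack (xmin m) i * w i)"
    unfolding dual_def w_def by (rule lagrangian_shift)
  also have "(\<Sum>i<N. slack (xmin m) i * w i)
             = (\<Sum>i<N. slack (xmin l) i * w i) - (\<Sum>i<N. w i * Amul \<Delta> i)"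
    by (simp add: slack_def \<Delta>_def Amul_def sum_subtractf algebra_simps)
  also have "(\<Sum>i<N. w i * Amul \<Delta> i) = (\<Sum>j<N. \<Delta> j * Amul w j)"
    by (rule sum_mult_Amul)
  finally have dual_m: "dual m = lagrangian (xmin m) l + (\<Sum>i<N. slack (xmin l) i * w i)
                                 - (\<Sum>j<N. \<Delta> j * Amul w j)"
    by simp
  have strong: "dual l + \<delta>/2 * sqnorm \<Delta> \<le> lagrangian (xmin m) l"
    unfolding \<Delta>_def by (rule dual_plus_sq_le_lagrangian) (simp add: xmin_bounds)
  have "(\<Sum>j<N. \<Delta> j * Amul w j) \<le> (\<Sum>j<N. \<delta>/2 * (\<Delta> j)^2 + (Amul w j)^2 / (2*\<delta>))"
    using delta_pos by (intro sum_mono mult_le_weighted_squares)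
  also have "\<dots> = \<delta>/2 * sqnorm \<Delta> + sqnorm (Amul w) / (2*\<delta>)"
    by (simp add: sqnorm_def sum.distrib sum_distrib_left sum_divide_distrib)
  also have "sqnorm (Amul w) / (2*\<delta>) \<le> D^2 * sqnorm w / (2*\<delta>)"
    using sqnorm_Amul_le[of w] delta_pos by (simp add: divide_right_mono)
  also have "\<dots> \<le> sqnorm w / (2*\<alpha>)"
    using delta_pos D_ge_1 sqnorm_nonneg[of w] by (simp add: alpha_eq field_simps)
  finally show ?thesis
    using dual_m strong unfolding w_def by linarith
qed

lemma dual_ascent_step:
  assumes "\<And>i. i < N \<Longrightarrow> u i \<ge> 0"
  shows "dual l + (\<Sum>i<N. slack (xmin l) i * (u i - l i)) - sqnorm (\<lambda>i. u i - l i) / (2*\<alpha>)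
         \<le> dual (ascent l)"
proof -
  define g where "g = slack (xmin l)"
  have quadratic: "(\<Sum>i<N. g i * (w i - l i)) - sqnorm (\<lambda>i. w i - l i) / (2*\<alpha>)
                   = (\<Sum>i<N. g i * (w i - l i) - (w i - l i)^2 / (2*\<alpha>))" for w
    by (simp add: sqnorm_def sum_divide_distrib sum_subtractf)
  have "(\<Sum>i<N. g i * (u i - l i) - (u i - l i)^2 / (2*\<alpha>))
        \<le> (\<Sum>i<N. g i * (ascent l i - l i) - (ascent l i - l i)^2 / (2*\<alpha>))"
  proof (intro sum_mono)
    fix i assume "i \<in> {..<N}"
    then have "g i * (u i - l i) - (u i - l i)^2 / (2*\<alpha>) + (u i - ascent l i)^2 / (2*\<alpha>)
               \<le> g i * (ascent l i - l i) - (ascent l i - l i)^2 / (2*\<alpha>)"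
      using pos_maximizes_concave_quadratic[OF alpha_pos assms] by (simp add: ascent_def g_def)
    moreover have "(u i - ascent l i)^2 / (2*\<alpha>) \<ge> 0"
      using alpha_pos by simp
    ultimately show "g i * (u i - l i) - (u i - l i)^2 / (2*\<alpha>)
               \<le> g i * (ascent l i - l i) - (ascent l i - l i)^2 / (2*\<alpha>)"
      by linarith
  qed
  then show ?thesis
    using dual_descent[of l "ascent l"] quadratic[of u] quadratic[of "ascent l"]
    unfolding g_def[symmetric] by linarith
qed

lemma accelerated_step:
  assumes "A \<ge> 0" "b > 0" "b^2 \<le> A + b"
    and \<mu>_nonneg: "\<And>i. i < N \<Longrightarrow> \<mu> i \<ge> 0" and v'_nonneg: "\<And>i. i < N \<Longrightarrow> v' i \<ge> 0"
    and l'_eq: "\<And>i. (A + b) * l' i = A * \<mu> i + b * v i"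
  shows "A * dual \<mu> + b * lagrangian (xmin l') v' - sqnorm (\<lambda>i. v' i - v i) / (2*\<alpha>)
         \<le> (A + b) * dual (ascent l')"
proof -
  define A' where "A' = A + b"
  define u where "u = (\<lambda>i. (A * \<mu> i + b * v' i) / A')"
  have A'_pos: "A' > 0"
    using assms(1,2) by (simp add: A'_def)
  have u_minus_l': "u i - l' i = b / A' * (v' i - v i)" for i
  proof -
    have "A' * u i = A * \<mu> i + b * v' i"
      using A'_pos by (simp add: u_def)
    then have "A' * (u i - l' i) = b * (v' i - v i)"
      using l'_eq[of i] by (simp add: A'_def algebra_simps)
    then show ?thesis
      using A'_pos by (simp add: field_simps)
  qed
  have "A * dual \<mu> + b * lagrangian (xmin l') v' \<le> A * lagrangian (xmin l') \<mu> + b * lagrangian (xmin l') v'"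
    using assms(1) by (simp add: mult_left_mono dual_le_lagrangian xmin_bounds)
  also have "\<dots> = A' * lagrangian (xmin l') u"
    using lagrangian_affine A'_pos by (simp add: A'_def u_def)
  also have "\<dots> = A' * (dual l' + (\<Sum>i<N. slack (xmin l') i * (u i - l' i)))"
    unfolding dual_def by (subst lagrangian_shift[where l = l']) simp
  finally have upper: "A * dual \<mu> + b * lagrangian (xmin l') v'
                       \<le> A' * (dual l' + (\<Sum>i<N. slack (xmin l') i * (u i - l' i)))" .
  have "u i \<ge> 0" if "i < N" for i
    using assms(1,2) A'_pos \<mu>_nonneg[OF that] v'_nonneg[OF that] by (simp add: u_def)
  then have "dual l' + (\<Sum>i<N. slack (xmin l') i * (u i - l' i)) - sqnorm (\<lambda>i. u i - l' i) / (2*\<alpha>)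
             \<le> dual (ascent l')"
    by (rule dual_ascent_step)
  moreover have "A' * sqnorm (\<lambda>i. u i - l' i) \<le> sqnorm (\<lambda>i. v' i - v i)"
  proof -
    have "A' * sqnorm (\<lambda>i. u i - l' i) = b^2 / A' * sqnorm (\<lambda>i. v' i - v i)"
      using sqnorm_scale[of "b / A'" "\<lambda>i. v' i - v i"] A'_pos
      by (simp add: u_minus_l' power2_eq_square)
    also have "\<dots> \<le> sqnorm (\<lambda>i. v' i - v i)"
      using assms(3) A'_pos sqnorm_nonneg by (intro mult_left_le_one_le) (auto simp: A'_def)
    finally show ?thesis .
  qed
  then have "A' * sqnorm (\<lambda>i. u i - l' i) / (2*\<alpha>) \<le> sqnorm (\<lambda>i. v' i - v i) / (2*\<alpha>)"
    using alpha_pos by (simp add: divide_right_mono)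
  ultimately have "A' * (dual l' + (\<Sum>i<N. slack (xmin l') i * (u i - l' i))) - sqnorm (\<lambda>i. v' i - v i) / (2*\<alpha>)
                   \<le> A' * dual (ascent l')"
    using A'_pos mult_left_mono[of _ _ A'] by (fastforce simp: right_diff_distrib)
  with upper show ?thesis
    unfolding A'_def by linarith
qed

definition lam :: "nat \<Rightarrow> nat \<Rightarrow> real" where
  "lam k = fst (alg_state N E \<delta> \<alpha> k)"

definition z :: "nat \<Rightarrow> nat \<Rightarrow> real" where
  "z k = fst (snd (alg_state N E \<delta> \<alpha> (Suc k)))"

definition mu :: "nat \<Rightarrow> nat \<Rightarrow> real" where
  "mu k = ascent (lam k)"

text \<open>v k is the maximizer over \<lambda> \<ge> 0 of the estimate function estimate k below.\<close>

definition v :: "nat \<Rightarrow> nat \<Rightarrow> real" where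
  "v k = (\<lambda>i. pos (\<alpha> * z k i))"

definition weight :: "nat \<Rightarrow> real" where
  "weight t = (real t + 1) / 2"

definition weight_sum :: "nat \<Rightarrow> real" where
  "weight_sum k = (real k + 1) * (real k + 2) / 4"

abbreviation xb :: "nat \<Rightarrow> nat \<Rightarrow> real" where
  "xb k \<equiv> xbar N E \<delta> \<alpha> k"

lemma lam_0: "lam 0 = (\<lambda>_. 0)"
  by (simp add: lam_def)

lemma lam_Suc: "lam (Suc k) i = (real k + 1) / (real k + 3) * mu k i + 2 / (real k + 3) * v k i"
  by (cases "alg_state N E \<delta> \<alpha> k")
     (simp add: lam_def z_def mu_def ascent_def v_def nonneg_mult_pos alpha_pos[THEN less_imp_le]
                xmin_def slack_def Amul_def Let_def mult.assoc)

lemma z_0: "z 0 i = 1/2 * slack (xmin (lam 0)) i"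
  by (simp add: lam_def z_def xmin_def slack_def Amul_def Let_def)

lemma z_Suc: "z (Suc k) i = z k i + (real k + 2) / 2 * slack (xmin (lam (Suc k))) i"
  by (cases "alg_state N E \<delta> \<alpha> (Suc k)")
     (simp add: lam_def z_def xmin_def slack_def Amul_def Let_def del: alg_state.simps(2),
      simp add: Let_def)

lemma xbar_0: "xb 0 j = xmin (lam 0) j"
  by (simp add: lam_def xbar_def xmin_def Let_def)

lemma xbar_Suc:
  "xb (Suc k) j = (real k + 1) / (real k + 3) * xb k j + 2 / (real k + 3) * xmin (lam (Suc k)) j"
  by (cases "alg_state N E \<delta> \<alpha> (Suc k)")
     (simp add: lam_def xbar_def xmin_def Let_def del: alg_state.simps(2), simp add: Let_def add.commute)

lemma weight_sum_0: "weight_sum 0 = weight 0"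
  by (simp add: weight_sum_def weight_def)

lemma weight_sum_Suc: "weight_sum (Suc k) = weight_sum k + weight (Suc k)"
  by (simp add: weight_sum_def weight_def field_simps)

lemma weight_sum_pos: "weight_sum k > 0"
  by (simp add: weight_sum_def)

lemma sum_weight: "(\<Sum>t\<le>k. weight t) = weight_sum k"
  by (induction k) (simp_all add: weight_sum_0 weight_sum_Suc)

lemma weight_sq_le_weight_sum: "(weight k)^2 \<le> weight_sum k"
  by (simp add: weight_def weight_sum_def power2_eq_square field_simps)

lemma lam_Suc_weighted:
  "weight_sum (Suc k) * lam (Suc k) i = weight_sum k * mu k i + weight (Suc k) * v k i"
proof -
  have "weight_sum (Suc k) * ((real k + 1) / (real k + 3)) = weight_sum k"
       "weight_sum (Suc k) * (2 / (real k + 3)) = weight (Suc k)"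
    by (simp_all add: weight_sum_def weight_def field_simps)
  then show ?thesis
    unfolding lam_Suc distrib_left mult.assoc[symmetric] by (simp only:)
qed

lemma z_eq_sum: "z k i = (\<Sum>t\<le>k. weight t * slack (xmin (lam t)) i)"
  by (induction k) (simp_all add: z_0 z_Suc weight_def)

lemma xbar_eq_average: "weight_sum k * xb k j = (\<Sum>t\<le>k. weight t * xmin (lam t) j)"
proof (induction k)
  case 0
  then show ?case by (simp add: xbar_0 weight_sum_0)
next
  case (Suc k)
  have "weight_sum (Suc k) * ((real k + 1) / (real k + 3)) = weight_sum k"
       "weight_sum (Suc k) * (2 / (real k + 3)) = weight (Suc k)"
    by (simp_all add: weight_sum_def weight_def field_simps)
  then have "weight_sum (Suc k) * xb (Suc k) j
             = weight_sum k * xb k j + weight (Suc k) * xmin (lam (Suc k)) j"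
    unfolding xbar_Suc distrib_left mult.assoc[symmetric] by (simp only:)
  with Suc show ?case by simp
qed

lemma mu_nonneg: "mu k i \<ge> 0"
  by (simp add: mu_def ascent_def pos_nonneg)

lemma v_nonneg: "v k i \<ge> 0"
  by (simp add: v_def pos_nonneg)

lemma xbar_nonneg: "xb k j \<ge> 0"
proof -
  have "weight_sum k * xb k j \<ge> 0"
    unfolding xbar_eq_average
    by (intro sum_nonneg mult_nonneg_nonneg) (auto simp: weight_def xmin_bounds)
  then show ?thesis
    using weight_sum_pos[of k] by (simp add: zero_le_mult_iff)
qed

lemma z_eq_slack_xbar: "z k i = weight_sum k * slack (xb k) i"
proof -
  have "(\<Sum>t\<le>k. weight t * Amul (xmin (lam t)) i) = (\<Sum>j\<in>nbhd i. \<Sum>t\<le>k. weight t * xmin (lam t) j)"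
    unfolding Amul_def sum_distrib_left by (rule sum.swap)
  also have "\<dots> = weight_sum k * Amul (xb k) i"
    by (simp add: xbar_eq_average[symmetric] Amul_def sum_distrib_left)
  finally show ?thesis
    by (simp add: z_eq_sum slack_def right_diff_distrib sum_subtractf sum_weight)
qed

definition estimate :: "nat \<Rightarrow> (nat \<Rightarrow> real) \<Rightarrow> real" where
  "estimate k l = (\<Sum>t\<le>k. weight t * lagrangian (xmin (lam t)) l) - sqnorm l / (2*\<alpha>)"

lemma estimate_eq:
  "estimate k l = (\<Sum>t\<le>k. weight t * cost (xmin (lam t))) + (\<Sum>i<N. l i * z k i - (l i)^2 / (2*\<alpha>))"
proof -
  have "(\<Sum>t\<le>k. \<Sum>i<N. weight t * (l i * slack (xmin (lam t)) i)) = (\<Sum>i<N. l i * z k i)"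
    by (subst sum.swap) (simp add: z_eq_sum sum_distrib_left algebra_simps)
  then show ?thesis
    by (simp add: estimate_def lagrangian_def sqnorm_def sum_divide_distrib sum_subtractf
                  distrib_left sum.distrib sum_distrib_left)
qed

lemma estimate_max:
  assumes "\<And>i. i < N \<Longrightarrow> l i \<ge> 0"
  shows "estimate k l + sqnorm (\<lambda>i. l i - v k i) / (2*\<alpha>) \<le> estimate k (v k)"
proof -
  have "(\<Sum>i<N. l i * z k i - (l i)^2 / (2*\<alpha>)) + sqnorm (\<lambda>i. l i - v k i) / (2*\<alpha>)
     = (\<Sum>i<N. z k i * l i - (l i)^2 / (2*\<alpha>) + (l i - v k i)^2 / (2*\<alpha>))"
    by (simp add: sqnorm_def sum_divide_distrib sum.distrib mult.commute)
  also have "\<dots> \<le> (\<Sum>i<N. z k i * v k i - (v k i)^2 / (2*\<alpha>))"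
  proof (intro sum_mono)
    fix i assume "i \<in> {..<N}"
    then show "z k i * l i - (l i)^2 / (2*\<alpha>) + (l i - v k i)^2 / (2*\<alpha>) \<le> z k i * v k i - (v k i)^2 / (2*\<alpha>)"
      using pos_maximizes_concave_quadratic[OF alpha_pos, where g = "z k i" and l = 0 and u = "l i"] assms
      by (simp add: v_def)
  qed
  finally show ?thesis
    by (simp add: estimate_eq mult.commute)
qed

lemma estimate_le_weighted_dual: "estimate k (v k) \<le> weight_sum k * dual (mu k)"
proof (induction k)
  case 0
  have "estimate 0 (v 0)
        = 0 * dual (mu 0) + weight 0 * lagrangian (xmin (lam 0)) (v 0) - sqnorm (\<lambda>i. v 0 i - 0) / (2*\<alpha>)"
    by (simp add: estimate_def)
  also have "\<dots> \<le> (0 + weight 0) * dual (ascent (lam 0))"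
    by (rule accelerated_step) (simp_all add: weight_def power2_eq_square mu_nonneg v_nonneg lam_0)
  finally show ?case
    by (simp add: weight_sum_0 mu_def)
next
  case (Suc k)
  let ?x = "xmin (lam (Suc k))" and ?v' = "v (Suc k)"
  have "estimate (Suc k) ?v' = estimate k ?v' + weight (Suc k) * lagrangian ?x ?v'"
    by (simp add: estimate_def)
  also have "\<dots> \<le> estimate k (v k) - sqnorm (\<lambda>i. ?v' i - v k i) / (2*\<alpha>) + weight (Suc k) * lagrangian ?x ?v'"
    using estimate_max[of ?v' k] by (simp add: v_nonneg)
  also have "\<dots> \<le> weight_sum k * dual (mu k) + weight (Suc k) * lagrangian ?x ?v'
                  - sqnorm (\<lambda>i. ?v' i - v k i) / (2*\<alpha>)"
    using Suc.IH by simp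
  also have "\<dots> \<le> (weight_sum k + weight (Suc k)) * dual (ascent (lam (Suc k)))"
    using weight_sq_le_weight_sum[of "Suc k"] weight_sum_pos[of k] lam_Suc_weighted[of k]
    by (intro accelerated_step) (simp_all add: weight_sum_Suc weight_def mu_nonneg v_nonneg)
  finally show ?case
    by (simp add: weight_sum_Suc mu_def)
qed

lemma estimate_le:
  assumes "\<And>i. i < N \<Longrightarrow> l i \<ge> 0"
  shows "estimate k l \<le> weight_sum k * dual (mu k)"
proof -
  have "0 \<le> sqnorm (\<lambda>i. l i - v k i) / (2*\<alpha>)"
    using alpha_pos sqnorm_nonneg by simp
  moreover have "estimate k l + sqnorm (\<lambda>i. l i - v k i) / (2*\<alpha>) \<le> estimate k (v k)"
    using assms by (rule estimate_max)
  ultimately show ?thesis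
    using estimate_le_weighted_dual[of k] by linarith
qed

lemma estimate_ge:
  "weight_sum k * (\<Sum>j<N. xb k j) + (\<Sum>i<N. l i * z k i - (l i)^2 / (2*\<alpha>)) \<le> estimate k l"
proof -
  have "weight_sum k * (\<Sum>j<N. xb k j) = (\<Sum>t\<le>k. weight t * (\<Sum>j<N. xmin (lam t) j))"
    by (simp add: sum_distrib_left xbar_eq_average sum.swap[of _ "{..<N}"])
  also have "\<dots> \<le> (\<Sum>t\<le>k. weight t * cost (xmin (lam t)))"
    using delta_pos by (intro sum_mono mult_left_mono) (auto simp: weight_def cost_def intro!: sum_mono)
  finally show ?thesis
    by (simp add: estimate_eq)
qed

lemma dual_le_optimal:
  assumes "\<And>j. j < N \<Longrightarrow> 0 \<le> x j \<and> x j \<le> 1" and "\<And>i. i < N \<Longrightarrow> Amul x i \<ge> 1"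
    and "\<And>i. i < N \<Longrightarrow> m i \<ge> 0"
  shows "dual m \<le> (1 + \<delta>/2) * (\<Sum>j<N. x j)"
proof -
  have "dual m \<le> lagrangian x m"
    using assms(1) by (rule dual_le_lagrangian)
  also have "\<dots> \<le> cost x"
    using assms(2,3) by (auto simp: lagrangian_def slack_def intro!: sum_nonpos mult_nonneg_nonpos)
  also have "\<dots> \<le> (\<Sum>j<N. (1 + \<delta>/2) * x j)"
    unfolding cost_def
  proof (intro sum_mono)
    fix j assume "j \<in> {..<N}"
    then have "(x j)^2 \<le> x j"
      using assms(1) by (simp add: power2_eq_square mult_left_le_one_le)
    then show "x j + \<delta>/2 * (x j)^2 \<le> (1 + \<delta>/2) * x j"
      using delta_pos by (simp add: algebra_simps)
  qed
  finally show ?thesis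
    by (simp add: sum_distrib_left)
qed

lemma alg_x_eq: "alg_x N E \<delta> \<alpha> k i = xb k i + pos (1 - Amul (xb k) i)"
  by (simp add: alg_x_def Amul_def)

text \<open>The multiplier c s, with c = \<alpha> A_k and s the constraint violation of xbar_k, turns the
  estimate into A_k (\<Sigma> xbar_k + c/2 \<parallel>s\<parallel>^2), and \<Sigma> s \<le> c/2 \<parallel>s\<parallel>^2 + N/(2c).\<close>

lemma sum_alg_x_le:
  assumes "\<And>j. j < N \<Longrightarrow> 0 \<le> x j \<and> x j \<le> 1" and "\<And>i. i < N \<Longrightarrow> Amul x i \<ge> 1"
  shows "(\<Sum>i<N. alg_x N E \<delta> \<alpha> k i) \<le> (1 + \<delta>/2) * (\<Sum>j<N. x j) + real N / (2 * (\<alpha> * weight_sum k))"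
proof -
  define s where "s = (\<lambda>i. pos (slack (xb k) i))"
  define c where "c = \<alpha> * weight_sum k"
  have c_pos: "c > 0"
    using alpha_pos weight_sum_pos by (simp add: c_def)
  have s_slack: "s i * slack (xb k) i = (s i)^2" for i
    by (auto simp: s_def pos_def power2_eq_square max_def)
  have summand: "c * s i * z k i - (c * s i)^2 / (2*\<alpha>) = weight_sum k * (c/2 * (s i)^2)" for i
  proof -
    have "c * s i * z k i = weight_sum k * c * (s i * slack (xb k) i)"
      by (simp add: z_eq_slack_xbar algebra_simps)
    moreover have "(c * s i)^2 / (2*\<alpha>) = weight_sum k * (c/2 * (s i)^2)"
      using alpha_pos by (simp add: c_def power2_eq_square field_simps)
    ultimately show ?thesis
      unfolding s_slack by (simp add: algebra_simps)
  qed
  have "weight_sum k * ((\<Sum>j<N. xb k j) + (\<Sum>i<N. c/2 * (s i)^2))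
        = weight_sum k * (\<Sum>j<N. xb k j) + (\<Sum>i<N. c * s i * z k i - (c * s i)^2 / (2*\<alpha>))"
    by (simp add: summand distrib_left sum_distrib_left)
  also have "\<dots> \<le> estimate k (\<lambda>i. c * s i)"
    by (rule estimate_ge)
  also have "\<dots> \<le> weight_sum k * dual (mu k)"
    using c_pos by (intro estimate_le) (simp add: s_def pos_nonneg)
  also have "\<dots> \<le> weight_sum k * ((1 + \<delta>/2) * (\<Sum>j<N. x j))"
    using weight_sum_pos[of k] dual_le_optimal[OF assms mu_nonneg] by (intro mult_left_mono) auto
  finally have "(\<Sum>j<N. xb k j) + (\<Sum>i<N. c/2 * (s i)^2) \<le> (1 + \<delta>/2) * (\<Sum>j<N. x j)"
    using weight_sum_pos[of k] by (simp add: mult_le_cancel_left_pos)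
  moreover have "(\<Sum>i<N. s i) \<le> (\<Sum>i<N. c/2 * (s i)^2) + real N / (2*c)"
  proof -
    have "(\<Sum>i<N. s i) \<le> (\<Sum>i<N. c/2 * (s i)^2 + 1/(2*c))"
      using le_quadratic_plus_inverse[OF c_pos] by (intro sum_mono) auto
    then show ?thesis
      by (simp add: sum.distrib)
  qed
  moreover have "(\<Sum>i<N. alg_x N E \<delta> \<alpha> k i) = (\<Sum>j<N. xb k j) + (\<Sum>i<N. s i)"
    by (simp add: alg_x_eq s_def slack_def sum.distrib)
  ultimately show ?thesis
    by (simp add: c_def)
qed

lemma alg_x_feasible: "fds_feasible N E (alg_x N E \<delta> \<alpha> k)"
  unfolding fds_feasible_iff
proof (intro conjI allI impI)
  fix i assume i: "i < N"
  have "Amul (alg_x N E \<delta> \<alpha> k) i = Amul (xb k) i + (\<Sum>j\<in>nbhd i. pos (1 - Amul (xb k) j))"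
    by (simp add: Amul_def alg_x_eq sum.distrib)
  also have "\<dots> \<ge> Amul (xb k) i + pos (1 - Amul (xb k) i)"
    using member_le_sum[of i "nbhd i" "\<lambda>j. pos (1 - Amul (xb k) j)"] self_in_nbhd[OF i] finite_nbhd
    by (simp add: pos_nonneg)
  finally show "1 \<le> Amul (alg_x N E \<delta> \<alpha> k) i"
    by (simp add: pos_def)
next
  fix i assume "i < N"
  show "0 \<le> alg_x N E \<delta> \<alpha> k i"
    using xbar_nonneg[of k i] by (simp add: alg_x_eq pos_nonneg)
qed

text \<open>Lowering an entry above 1 to 1 keeps every covering constraint through it satisfied.\<close>

lemma fds_optimal_le_1:
  assumes opt: "fds_optimal N E x" and j: "j < N"
  shows "x j \<le> 1"
proof (rule ccontr)
  assume "\<not> x j \<le> 1"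
  define y where "y = x(j := 1)"
  have feas: "\<forall>i<N. Amul x i \<ge> 1" "\<forall>i<N. x i \<ge> 0"
    using opt by (simp_all add: fds_optimal_def fds_feasible_iff)
  have "\<forall>i<N. Amul y i \<ge> 1"
  proof (intro allI impI)
    fix i assume "i < N"
    show "Amul y i \<ge> 1"
    proof (cases "j \<in> nbhd i")
      case True
      then have "y j \<le> Amul y i"
        unfolding Amul_def using finite_nbhd nbhd_subset feas(2)
        by (intro member_le_sum) (auto simp: y_def)
      then show ?thesis by (simp add: y_def)
    next
      case False
      then have "Amul y i = Amul x i"
        unfolding Amul_def y_def by (intro sum.cong) auto
      then show ?thesis using feas(1) \<open>i < N\<close> by simp
    qed
  qed
  moreover have "\<forall>i<N. y i \<ge> 0"
    using feas(2) by (simp add: y_def)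
  moreover have "(\<Sum>i<N. y i) < (\<Sum>i<N. x i)"
    using j \<open>\<not> x j \<le> 1\<close> by (intro sum_strict_mono_ex1) (auto simp: y_def)
  ultimately show False
    using opt unfolding fds_optimal_def fds_feasible_iff by (meson not_less)
qed

lemma card_le_D_mult_sum:
  assumes "fds_feasible N E x"
  shows "real N \<le> D * (\<Sum>j<N. x j)"
proof -
  have "real N \<le> (\<Sum>i<N. Amul x i)"
    using assms sum_mono[of "{..<N}" "\<lambda>_. 1 :: real"] by (simp add: fds_feasible_iff)
  also have "\<dots> \<le> (\<Sum>j<N. D * x j)"
    unfolding sum_Amul using assms card_nbhd_le_D
    by (intro sum_mono mult_right_mono) (auto simp: fds_feasible_iff)
  finally show ?thesis
    by (simp add: sum_distrib_left)
qed

lemma inverse_weight_sum_le: "1 / (\<delta> * weight_sum k) \<le> 32 * (1 + 1/\<delta>) * (1 / (real k + 1)^2)"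
proof -
  have "1 / (\<delta> * weight_sum k) = 4 / (\<delta> * ((real k + 1) * (real k + 2)))"
    by (simp add: weight_sum_def)
  also have "\<dots> \<le> 4 / (\<delta> * ((real k + 1) * (real k + 1)))"
    using delta_pos by (intro divide_left_mono mult_left_mono mult_pos_pos) auto
  also have "\<dots> = (4/\<delta>) * (1 / (real k + 1)^2)"
    by (simp add: power2_eq_square)
  also have "\<dots> \<le> 32 * (1 + 1/\<delta>) * (1 / (real k + 1)^2)"
    using delta_pos by (intro mult_right_mono) (auto simp: field_simps)
  finally show ?thesis .
qed

lemma relative_gap_le:
  assumes opt: "fds_optimal N E x"
  shows "((\<Sum>i<N. alg_x N E \<delta> \<alpha> k i) - (\<Sum>i<N. x i)) / (\<Sum>i<N. x i)
         \<le> 32 * D^3 * (1 + 1/\<delta>) * (1 / (real k + 1)^2) + \<delta>/2"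
proof (cases "N = 0")
  case True
  then show ?thesis
    using D_ge_1 delta_pos by simp
next
  case False
  define S where "S = (\<Sum>i<N. x i)"
  have feas: "fds_feasible N E x"
    using opt by (simp add: fds_optimal_def)
  have N_le: "real N \<le> D * S"
    unfolding S_def using feas by (rule card_le_D_mult_sum)
  have S_pos: "S > 0"
  proof (rule ccontr)
    assume "\<not> S > 0"
    then have "D * S \<le> 0"
      using D_ge_1 by (simp add: mult_nonneg_nonpos)
    with N_le False show False by simp
  qed
  define bound where "bound = D^3 * (32 * (1 + 1/\<delta>) * (1 / (real k + 1)^2))"
  have "real N / (2 * (\<alpha> * weight_sum k)) \<le> D * S / (2 * (\<alpha> * weight_sum k))"
    using N_le alpha_pos weight_sum_pos[of k] by (simp add: divide_right_mono)
  also have "\<dots> = D^3 * (1 / (\<delta> * weight_sum k)) * S"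
    using D_ge_1 by (simp add: alpha_eq power2_eq_square power3_eq_cube)
  also have "\<dots> \<le> bound * S"
    unfolding bound_def using inverse_weight_sum_le[of k] D_ge_1 S_pos
    by (intro mult_right_mono mult_left_mono) auto
  finally have "real N / (2 * (\<alpha> * weight_sum k)) \<le> bound * S" .
  moreover have "(\<Sum>i<N. alg_x N E \<delta> \<alpha> k i) \<le> (1 + \<delta>/2) * S + real N / (2 * (\<alpha> * weight_sum k))"
    unfolding S_def using feas fds_optimal_le_1[OF opt]
    by (intro sum_alg_x_le) (auto simp: fds_feasible_iff)
  ultimately have "(\<Sum>i<N. alg_x N E \<delta> \<alpha> k i) - S \<le> (bound + \<delta>/2) * S"
    by (simp add: algebra_simps)
  then show ?thesis
    using S_pos by (simp add: S_def[symmetric] bound_def pos_divide_le_eq algebra_simps)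
qed

end

theorem theorem1:
  fixes N :: nat and E :: "nat set set" and xstar :: "nat \<Rightarrow> real" and \<delta> \<alpha> :: real
  assumes "is_graph N E"
    and "fds_optimal N E xstar"
    and "\<delta> > 0"
    and "\<alpha> = \<delta> / (2 * (real (dmax N E) + 1) ^ 2)"
  shows "\<forall>k. fds_feasible N E (alg_x N E \<delta> \<alpha> k) \<and>
     ((\<Sum>i<N. alg_x N E \<delta> \<alpha> k i) - (\<Sum>i<N. xstar i)) / (\<Sum>i<N. xstar i)
       \<le> 32 * (real (dmax N E) + 1) ^ 3 * (1 + 1 / \<delta>) * (1 / (real k + 1) ^ 2) + \<delta> / 2"
proof -
  interpret fds_dual_method N E \<delta> \<alpha>
    using assms(3,4) by unfold_locales
  show ?thesis
    using alg_x_feasible relative_gap_le[OF assms(2)] by (simp add: D_def)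
qed

end
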